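(* Consider a CoMP BC under the finite-field model over $\mathbb F_q$ with connectivity matrix $\mathbf M\in\{0,*\}^{K\times B}$. Then for every prime power $q$, $C_\Sigma^{\mathrm{NS}}(q)\ge \operatorname{tri}(\mathbf M)\log_2 q$, and $d_\Sigma^{\mathrm{NS}}\ge\operatorname{tri}(\mathbf M)$.
   Context: CoMP BC, finite-field model: $B$ transmit antennas, $K$ receivers, connectivity $\mathbf M\in\{0,*\}^{K\times B}$. At use $\tau$ the transmitter sends $X^{(\tau)}\in\mathbb F_q^B$ and Rx-$k$ observes $(Y_k^{(\tau)},(G_{kj}^{(\tau)})_j)$, $Y_k^{(\tau)}=\sum_jG_{kj}^{(\tau)}X_j^{(\tau)}$; coefficients mutually independent over $k,j,\tau$ and of the messages, uniform on $\mathbb F_q^\times$ if $M_{kj}=*$, else $0$. Messages $W_k$ independent, uniform on finite $\mathcal M_k$. A $\kappa$-partite NS box is a conditional pmf of outputs given inputs (finite output alphabets) whose output marginals for any subset of parties depend only on those parties' inputs. An NS-assisted scheme is a $(K+1)$-partite NS box where the transmitter inputs $(W_1,\dots,W_K)$ and obtains the channel input sequence, and Rx-$k$ inputs its channel output sequence and obtains $\hat W_k$; joint law = uniform message pmf $\times$ box $\times$ channel. Rates are achievable if some sequence of schemes has vanishing $\max_k\Pr(\hat W_k\ne W_k)$ and $\lim\frac1n\log_2|\mathcal M_k|\ge R_k$; $C_\Sigma^{\mathrm{NS}}(q)$ is the maximal sum rate over the closure. A DoF tuple is achievable if for each prime power $q$ some NS-achievable rate tuple has $\lim_q R_k(q)/\log_2q\ge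 d_k$; $d_\Sigma^{\mathrm{NS}}$ is the maximal sum over the closure. $\mathbf M$ contains a $D$-triangular matrix if after permuting rows and columns it has a $D\times D$ submatrix that is lower triangular with all diagonal entries $*$; $\operatorname{tri}(\mathbf M)$ is the largest such $D$. *)

theory Defs
  imports "HOL-Probability.Probability_Mass_Function" "HOL-Algebra.Ring"
          "HOL-Number_Theory.Prime_Powers" "HOL-Library.FuncSet"
begin

(* Connectivity matrix: M k j = True means M_kj = *, False means M_kj = 0;
   receivers k < K, antennas j < B.
   Finite field F_q: a HOL-Algebra field structure with finite carrier of
   natural numbers (every finite field is isomorphic to one of these). *)

definition has_tri :: "(nat \<Rightarrow> nat \<Rightarrow> bool) \<Rightarrow> nat \<Rightarrow> nat \<Rightarrow> nat \<Rightarrow> bool" where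
  "has_tri M K B D \<longleftrightarrow> (\<exists>r c. inj_on r {..<D} \<and> r ` {..<D} \<subseteq> {..<K} \<and>
      inj_on c {..<D} \<and> c ` {..<D} \<subseteq> {..<B} \<and>
      (\<forall>i<D. M (r i) (c i)) \<and> (\<forall>i<D. \<forall>j<D. i < j \<longrightarrow> \<not> M (r i) (c j)))"

definition tri :: "(nat \<Rightarrow> nat \<Rightarrow> bool) \<Rightarrow> nat \<Rightarrow> nat \<Rightarrow> nat" where
  "tri M K B = Max {D. has_tri M K B D}"

(* A kappa-partite NS box: party i < kappa has input alphabet I i; the box maps
   each input tuple to a pmf on output tuples (only coordinates < kappa matter). *)
definition ns_box :: "nat \<Rightarrow> (nat \<Rightarrow> 'i set) \<Rightarrow> ((nat \<Rightarrow> 'i) \<Rightarrow> (nat \<Rightarrow> 'o) pmf) \<Rightarrow> bool" where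
  "ns_box \<kappa> I P \<longleftrightarrow>
     (\<exists>Out. (\<forall>i<\<kappa>. finite (Out i)) \<and>
          (\<forall>a\<in>PiE {..<\<kappa>} I. \<forall>ou\<in>set_pmf (P a). \<forall>i<\<kappa>. ou i \<in> Out i)) \<and>
     (\<forall>S\<subseteq>{..<\<kappa>}. \<forall>a\<in>PiE {..<\<kappa>} I. \<forall>a'\<in>PiE {..<\<kappa>} I.
         (\<forall>i\<in>S. a i = a' i) \<longrightarrow>
         map_pmf (\<lambda>ou. restrict ou S) (P a) = map_pmf (\<lambda>ou. restrict ou S) (P a'))"

(* Party 0 = transmitter, party Suc k = receiver k. *)
datatype party_in = TxIn "nat \<Rightarrow> nat" | RxIn "nat \<Rightarrow> nat" "nat \<Rightarrow> nat \<Rightarrow> nat"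
datatype party_out = TxOut "nat \<Rightarrow> nat \<Rightarrow> nat" | RxOut nat

definition msg_set :: "nat \<Rightarrow> (nat \<Rightarrow> nat) \<Rightarrow> (nat \<Rightarrow> nat) set" where
  "msg_set K m = PiE {..<K} (\<lambda>k. {..<m k})"

(* channel input sequences X : tau \<mapsto> j \<mapsto> X_j^(tau) *)
definition chin_set :: "nat ring \<Rightarrow> nat \<Rightarrow> nat \<Rightarrow> (nat \<Rightarrow> nat \<Rightarrow> nat) set" where
  "chin_set F B n = PiE {..<n} (\<lambda>_. PiE {..<B} (\<lambda>_. carrier F))"

(* channel coefficient realisations G : tau \<mapsto> k \<mapsto> j \<mapsto> G_kj^(tau) *)
definition coef_set :: "nat ring \<Rightarrow> (nat \<Rightarrow> nat \<Rightarrow> bool) \<Rightarrow> nat \<Rightarrow> nat \<Rightarrow> nat \<Rightarrow> (nat \<Rightarrow> nat \<Rightarrow> nat \<Rightarrow> nat) set" where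
  "coef_set F M K B n = PiE {..<n} (\<lambda>_. PiE {..<K} (\<lambda>k. PiE {..<B} (\<lambda>j.
      if M k j then carrier F - {\<zero>\<^bsub>F\<^esub>} else {\<zero>\<^bsub>F\<^esub>})))"

definition party_inputs :: "nat ring \<Rightarrow> nat \<Rightarrow> nat \<Rightarrow> nat \<Rightarrow> (nat \<Rightarrow> nat) \<Rightarrow> nat \<Rightarrow> party_in set" where
  "party_inputs F K B n m i =
     (if i = 0 then TxIn ` msg_set K m
      else (\<lambda>(y, g). RxIn y g) ` (PiE {..<n} (\<lambda>_. carrier F) \<times> chin_set F B n))"

definition rx_obs_Y :: "nat ring \<Rightarrow> nat \<Rightarrow> nat \<Rightarrow> (nat \<Rightarrow> nat \<Rightarrow> nat) \<Rightarrow> (nat \<Rightarrow> nat \<Rightarrow> nat \<Rightarrow> nat) \<Rightarrow> nat \<Rightarrow> nat \<Rightarrow> nat" where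
  "rx_obs_Y F B n X G k = restrict (\<lambda>\<tau>. finsum F (\<lambda>j. G \<tau> k j \<otimes>\<^bsub>F\<^esub> X \<tau> j) {..<B}) {..<n}"

definition rx_obs_G :: "nat \<Rightarrow> nat \<Rightarrow> (nat \<Rightarrow> nat \<Rightarrow> nat \<Rightarrow> nat) \<Rightarrow> nat \<Rightarrow> nat \<Rightarrow> nat \<Rightarrow> nat" where
  "rx_obs_G B n G k = restrict (\<lambda>\<tau>. restrict (\<lambda>j. G \<tau> k j) {..<B}) {..<n}"

definition box_input :: "nat ring \<Rightarrow> nat \<Rightarrow> nat \<Rightarrow> nat \<Rightarrow> (nat \<Rightarrow> nat) \<Rightarrow> (nat \<Rightarrow> nat \<Rightarrow> nat)
      \<Rightarrow> (nat \<Rightarrow> nat \<Rightarrow> nat \<Rightarrow> nat) \<Rightarrow> nat \<Rightarrow> party_in" where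
  "box_input F K B n w X G = restrict (\<lambda>i. if i = 0 then TxIn w
      else RxIn (rx_obs_Y F B n X G (i - 1)) (rx_obs_G B n G (i - 1))) {..<Suc K}"

definition ns_scheme :: "nat ring \<Rightarrow> (nat \<Rightarrow> nat \<Rightarrow> bool) \<Rightarrow> nat \<Rightarrow> nat \<Rightarrow> nat \<Rightarrow> (nat \<Rightarrow> nat)
      \<Rightarrow> ((nat \<Rightarrow> party_in) \<Rightarrow> (nat \<Rightarrow> party_out) pmf) \<Rightarrow> bool" where
  "ns_scheme F M K B n m P \<longleftrightarrow> n > 0 \<and> (\<forall>k<K. m k > 0) \<and>
     ns_box (Suc K) (party_inputs F K B n m) P \<and>
     (\<forall>a\<in>PiE {..<Suc K} (party_inputs F K B n m). \<forall>ou\<in>set_pmf (P a).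
        ou 0 \<in> TxOut ` chin_set F B n \<and> (\<forall>k<K. ou (Suc k) \<in> range RxOut))"

(* Pr(hat W_k \<noteq> W_k) under the joint law
   uniform messages \<times> box \<times> channel (coefficients i.i.d. uniform on F^\<times> or 0) *)
definition err_prob :: "nat ring \<Rightarrow> (nat \<Rightarrow> nat \<Rightarrow> bool) \<Rightarrow> nat \<Rightarrow> nat \<Rightarrow> nat \<Rightarrow> (nat \<Rightarrow> nat)
      \<Rightarrow> ((nat \<Rightarrow> party_in) \<Rightarrow> (nat \<Rightarrow> party_out) pmf) \<Rightarrow> nat \<Rightarrow> real" where
  "err_prob F M K B n m P k =
     (\<Sum>w\<in>msg_set K m. \<Sum>X\<in>chin_set F B n. \<Sum>G\<in>coef_set F M K B n.
        (1 / (real (card (msg_set K m)) * real (card (coef_set F M K B n)))) *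
        measure_pmf.prob (P (box_input F K B n w X G))
          {ou. ou 0 = TxOut X \<and> ou (Suc k) \<noteq> RxOut (w k)})"

definition ns_achievable :: "nat ring \<Rightarrow> (nat \<Rightarrow> nat \<Rightarrow> bool) \<Rightarrow> nat \<Rightarrow> nat \<Rightarrow> (nat \<Rightarrow> real) \<Rightarrow> bool" where
  "ns_achievable F M K B R \<longleftrightarrow>
     (\<exists>n m P. (\<forall>s. ns_scheme F M K B (n s) (m s) (P s)) \<and>
        (\<forall>k<K. (\<lambda>s. err_prob F M K B (n s) (m s) (P s) k) \<longlonglongrightarrow> 0) \<and>
        (\<forall>k<K. \<exists>L. (\<lambda>s. log 2 (real (m s k)) / real (n s)) \<longlonglongrightarrow> L \<and> L \<ge> R k))"

definition C_sum_NS :: "nat ring \<Rightarrow> (nat \<Rightarrow> nat \<Rightarrow> bool) \<Rightarrow> nat \<Rightarrow> nat \<Rightarrow> ereal" where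
  "C_sum_NS F M K B = (SUP R \<in> closure {R. ns_achievable F M K B R}. ereal (\<Sum>k<K. R k))"

(* DoF: Fam q is the field F_q for each prime power q *)
definition dof_achievable :: "(nat \<Rightarrow> nat ring) \<Rightarrow> (nat \<Rightarrow> nat \<Rightarrow> bool) \<Rightarrow> nat \<Rightarrow> nat \<Rightarrow> (nat \<Rightarrow> real) \<Rightarrow> bool" where
  "dof_achievable Fam M K B d \<longleftrightarrow>
     (\<exists>R. (\<forall>q. primepow q \<longrightarrow> ns_achievable (Fam q) M K B (R q)) \<and>
        (\<forall>k<K. \<exists>L. ((\<lambda>q. R q k / log 2 (real q)) \<longlongrightarrow> L) (inf at_top (principal {q. primepow q}))
                   \<and> L \<ge> d k))"

definition d_sum_NS :: "(nat \<Rightarrow> nat ring) \<Rightarrow> (nat \<Rightarrow> nat \<Rightarrow> bool) \<Rightarrow> nat \<Rightarrow> nat \<Rightarrow> ereal" where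
  "d_sum_NS Fam M K B = (SUP d \<in> closure {d. dof_achievable Fam M K B d}. ereal (\<Sum>k<K. d k))"

end

theory Submission
  imports Defs
begin

(* Pick a triangular D x D submatrix: rows r 0, ..., r (D-1) and columns c 0, ..., c (D-1) such
   that receiver r l hears antenna c l with a nonzero gain g_{c l} and none of the antennas c m,
   m > l.  One channel use with one non-signaling box then carries one error-free symbol of F_q
   to each receiver r l.  The box draws x uniformly from F_q^D, the transmitter sends x_m on
   antenna c m, and receiver r l outputs x_l + w_l - g_{c l}^-1 (y - sum_{m<l} g_{c m} x_m),
   computed from its observation (y, g), its message w_l and x_<l.  On the true channel
   realisation the bracket is g_{c l} x_l, so the output is w_l.  The box is non-signaling:
   coalitions containing the transmitter see outputs depending only on their own inputs, and the
   receivers' outputs are the image of x under a triangular bijection of F_q^D, hence uniform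
   whatever the inputs. *)

lemma map_pmf_of_set_PiE_triangular:
  fixes \<phi> :: "nat \<Rightarrow> (nat \<Rightarrow> 'a) \<Rightarrow> 'a \<Rightarrow> 'a"
  assumes closed: "\<And>l z t. l < D \<Longrightarrow> t \<in> C \<Longrightarrow> \<phi> l z t \<in> C"
    and inj: "\<And>l z. l < D \<Longrightarrow> inj_on (\<phi> l z) C"
    and "finite C" and "C \<noteq> {}"
  shows "map_pmf (\<lambda>x. restrict (\<lambda>l. \<phi> l (restrict x {..<l}) (x l)) {..<D})
           (pmf_of_set (PiE {..<D} (\<lambda>_. C))) = pmf_of_set (PiE {..<D} (\<lambda>_. C))"
proof -
  define A where "A = PiE {..<D} (\<lambda>_. C)"
  define f where "f = (\<lambda>x. restrict (\<lambda>l. \<phi> l (restrict x {..<l}) (x l)) {..<D})"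
  have "finite A" "A \<noteq> {}"
    unfolding A_def using assms(3,4) by (simp_all add: finite_PiE PiE_eq_empty_iff)
  have "f ` A \<subseteq> A" unfolding A_def f_def using closed by (auto simp: PiE_iff)
  have "inj_on f A"
  proof (rule inj_onI)
    fix x y assume x: "x \<in> A" and y: "y \<in> A" and "f x = f y"
    have "x i = y i" if "i < D" for i
      using that
    proof (induction i rule: less_induct)
      case (less i)
      have "restrict x {..<i} = restrict y {..<i}"
        using less by (auto intro!: restrict_ext)
      moreover have "f x i = f y i" using \<open>f x = f y\<close> by simp
      ultimately have "\<phi> i (restrict x {..<i}) (x i) = \<phi> i (restrict x {..<i}) (y i)"
        using less.prems unfolding f_def by simp
      moreover have "x i \<in> C" "y i \<in> C" using x y less.prems unfolding A_def by auto
      ultimately show ?case using inj[OF less.prems] by (auto dest: inj_onD)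
    qed
    then show "x = y" using x y unfolding A_def by (metis PiE_ext lessThan_iff)
  qed
  with \<open>finite A\<close> \<open>f ` A \<subseteq> A\<close> have "f ` A = A" by (rule endo_inj_surj)
  then show ?thesis
    using map_pmf_of_set_inj[OF \<open>inj_on f A\<close> \<open>A \<noteq> {}\<close> \<open>finite A\<close>] unfolding A_def f_def by simp
qed

lemma has_tri_le: "has_tri M K B D \<Longrightarrow> D \<le> K"
proof -
  assume "has_tri M K B D"
  then obtain r where "inj_on r {..<D}" "r ` {..<D} \<subseteq> {..<K}" unfolding has_tri_def by blast
  then show ?thesis using card_inj_on_le[of r "{..<D}" "{..<K}"] by simp
qed

lemma has_tri_tri: "has_tri M K B (tri M K B)"
proof -
  have "finite {D. has_tri M K B D}"
    by (rule finite_subset[of _ "{..K}"]) (auto dest: has_tri_le)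
  moreover have "has_tri M K B 0" unfolding has_tri_def by (intro exI[of _ id]) auto
  ultimately show ?thesis using Max_in[of "{D. has_tri M K B D}"] unfolding tri_def by blast
qed

lemma ns_achievable_zero_error:
  assumes "ns_scheme F M K B n m P" and "\<And>k. k < K \<Longrightarrow> err_prob F M K B n m P k = 0"
  shows "ns_achievable F M K B (\<lambda>k. log 2 (real (m k)) / real n)"
  unfolding ns_achievable_def
proof (intro exI[of _ "\<lambda>_. n"] exI[of _ "\<lambda>_. m"] exI[of _ "\<lambda>_. P"] conjI allI impI)
  fix k assume "k < K"
  show "(\<lambda>s. err_prob F M K B n m P k) \<longlonglongrightarrow> 0" by (simp add: assms(2)[OF \<open>k < K\<close>])
  show "\<exists>L. (\<lambda>s. log 2 (real (m k)) / real n) \<longlonglongrightarrow> L \<and> log 2 (real (m k)) / real n \<le> L"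
    using tendsto_const by blast
qed (rule assms(1))

lemma C_sum_NS_ge: "ns_achievable F M K B R \<Longrightarrow> ereal (\<Sum>k<K. R k) \<le> C_sum_NS F M K B"
  unfolding C_sum_NS_def by (rule SUP_upper, rule closure_subset[THEN subsetD]) simp

lemma d_sum_NS_ge: "dof_achievable Fam M K B d \<Longrightarrow> ereal (\<Sum>k<K. d k) \<le> d_sum_NS Fam M K B"
  unfolding d_sum_NS_def by (rule SUP_upper, rule closure_subset[THEN subsetD]) simp

lemma dof_achievable_scaled:
  assumes "\<And>q. primepow q \<Longrightarrow> ns_achievable (Fam q) M K B (\<lambda>k. d k * log 2 (real q))"
  shows "dof_achievable Fam M K B d"
  unfolding dof_achievable_def
proof (intro exI[of _ "\<lambda>q k. d k * log 2 (real q)"] conjI allI impI)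
  fix k
  have "\<forall>\<^sub>F q in inf at_top (principal {q. primepow q}). d k * log 2 (real q) / log 2 (real q) = d k"
    unfolding eventually_inf_principal
  proof (intro always_eventually allI impI)
    fix q :: nat assume "q \<in> {q. primepow q}"
    then have "log 2 (real q) > 0" using primepow_gt_Suc_0[of q] by simp
    then show "d k * log 2 (real q) / log 2 (real q) = d k" by simp
  qed
  then have "((\<lambda>q. d k * log 2 (real q) / log 2 (real q)) \<longlongrightarrow> d k)
      (inf at_top (principal {q. primepow q}))"
    by (rule tendsto_eventually)
  then show "\<exists>L. ((\<lambda>q. d k * log 2 (real q) / log 2 (real q)) \<longlongrightarrow> L)
      (inf at_top (principal {q. primepow q})) \<and> d k \<le> L"
    by (intro exI[of _ "d k"]) simp
qed (simp add: assms)

lemma box_input_tx: "box_input F K B n w X G 0 = TxIn w"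
  by (simp add: box_input_def)

lemma box_input_rx:
  "k < K \<Longrightarrow> box_input F K B n w X G (Suc k) = RxIn (rx_obs_Y F B n X G k) (rx_obs_G B n G k)"
  by (simp add: box_input_def)

lemma coef_set_pattern:
  "G \<in> coef_set F M K B n \<Longrightarrow> \<tau> < n \<Longrightarrow> k < K \<Longrightarrow> j < B \<Longrightarrow>
     G \<tau> k j \<in> (if M k j then carrier F - {\<zero>\<^bsub>F\<^esub>} else {\<zero>\<^bsub>F\<^esub>})"
  by (auto simp: coef_set_def PiE_iff)

fun tx_msg :: "party_in \<Rightarrow> nat \<Rightarrow> nat" where
  "tx_msg (TxIn w) = w"
| "tx_msg (RxIn _ _) = (\<lambda>_. 0)"

fun rx_Y :: "party_in \<Rightarrow> nat \<Rightarrow> nat" where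
  "rx_Y (TxIn _) = (\<lambda>_. 0)"
| "rx_Y (RxIn y _) = y"

fun rx_G :: "party_in \<Rightarrow> nat \<Rightarrow> nat \<Rightarrow> nat" where
  "rx_G (TxIn _) = (\<lambda>_ _. 0)"
| "rx_G (RxIn _ g) = g"

(* e numbers the field elements; a message k < q is carried as the field element e k. *)
locale triangular_scheme = field R for R :: "nat ring" (structure) +
  fixes M :: "nat \<Rightarrow> nat \<Rightarrow> bool" and K B D :: nat and r c e :: "nat \<Rightarrow> nat"
  assumes finite_carrier: "finite (carrier R)"
    and r_inj: "inj_on r {..<D}" and r_range: "r ` {..<D} \<subseteq> {..<K}"
    and c_inj: "inj_on c {..<D}" and c_range: "c ` {..<D} \<subseteq> {..<B}"
    and diagonal: "\<And>l. l < D \<Longrightarrow> M (r l) (c l)"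
    and triangular: "\<And>l m. l < m \<Longrightarrow> m < D \<Longrightarrow> \<not> M (r l) (c m)"
    and e_bij: "bij_betw e {..<card (carrier R)} (carrier R)"
begin

abbreviation q where "q \<equiv> card (carrier R)"

abbreviation decode where "decode \<equiv> inv_into {..<q} e"

definition antenna_vec :: "nat \<Rightarrow> (nat \<Rightarrow> nat) \<Rightarrow> nat \<Rightarrow> nat" where
  "antenna_vec l z j = (if j \<in> c ` {..<l} then z (inv_into {..<l} c j) else \<zero>)"

definition tx_input :: "(nat \<Rightarrow> nat) \<Rightarrow> nat \<Rightarrow> nat \<Rightarrow> nat" where
  "tx_input x = restrict (\<lambda>\<tau>. restrict (antenna_vec D x) {..<B}) {..<1}"

definition known_interference :: "nat \<Rightarrow> (nat \<Rightarrow> nat) \<Rightarrow> (nat \<Rightarrow> nat) \<Rightarrow> nat" where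
  "known_interference l g z = (\<Oplus>j\<in>{..<B} - {c l}. g j \<otimes> antenna_vec l z j)"

(* inv \<zero> is unspecified, so the guard keeps the shift in the carrier for arbitrary inputs. *)
definition rx_shift :: "party_in \<Rightarrow> party_in \<Rightarrow> nat \<Rightarrow> (nat \<Rightarrow> nat) \<Rightarrow> nat" where
  "rx_shift a0 ai l z = (let v = e (tx_msg a0 (r l)) \<ominus>
       inv (rx_G ai 0 (c l)) \<otimes> (rx_Y ai 0 \<ominus> known_interference l (rx_G ai 0) z)
     in if v \<in> carrier R then v else \<zero>)"

definition rx_values :: "(nat \<Rightarrow> party_in) \<Rightarrow> (nat \<Rightarrow> nat) \<Rightarrow> nat \<Rightarrow> nat" where
  "rx_values a x = restrict (\<lambda>l. x l \<oplus> rx_shift (a 0) (a (Suc (r l))) l (restrict x {..<l})) {..<D}"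

definition rx_out :: "(nat \<Rightarrow> nat) \<Rightarrow> nat \<Rightarrow> party_out" where
  "rx_out v k = (if k \<in> r ` {..<D} then RxOut (decode (v (inv_into {..<D} r k))) else RxOut 0)"

definition box_out :: "(nat \<Rightarrow> party_in) \<Rightarrow> (nat \<Rightarrow> nat) \<Rightarrow> nat \<Rightarrow> party_out" where
  "box_out a x i = (if i = 0 then TxOut (tx_input x) else rx_out (rx_values a x) (i - 1))"

definition uniform_streams :: "(nat \<Rightarrow> nat) pmf" where
  "uniform_streams = pmf_of_set (PiE {..<D} (\<lambda>_. carrier R))"

definition box :: "(nat \<Rightarrow> party_in) \<Rightarrow> (nat \<Rightarrow> party_out) pmf" where
  "box a = map_pmf (box_out a) uniform_streams"

definition msg_size :: "nat \<Rightarrow> nat" where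
  "msg_size k = (if k \<in> r ` {..<D} then q else 1)"

lemma q_pos: "0 < q"
  using finite_carrier zero_closed card_gt_0_iff by blast

lemma e_closed: "k < q \<Longrightarrow> e k \<in> carrier R"
  using e_bij by (auto dest: bij_betwE)

lemma decode_e: "k < q \<Longrightarrow> decode (e k) = k"
  using e_bij by (simp add: bij_betw_inv_into_left)

lemma decode_range: "v \<in> carrier R \<Longrightarrow> decode v < q"
  using e_bij by (auto simp: bij_betw_def intro: inv_into_into[of v e "{..<q}", simplified])

lemma antenna_vec_closed: "(\<And>m. m < l \<Longrightarrow> z m \<in> carrier R) \<Longrightarrow> antenna_vec l z j \<in> carrier R"
  using inv_into_into[of j c "{..<l}"] by (auto simp: antenna_vec_def)

lemma antenna_vec_stream: "m < l \<Longrightarrow> l \<le> D \<Longrightarrow> antenna_vec l z (c m) = z m"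
  using inj_on_subset[OF c_inj, of "{..<l}"] by (simp add: antenna_vec_def)

lemma tx_input_closed: "x \<in> PiE {..<D} (\<lambda>_. carrier R) \<Longrightarrow> tx_input x \<in> chin_set R B 1"
  unfolding tx_input_def chin_set_def using antenna_vec_closed[of D x] by (auto simp: PiE_iff)

lemma set_pmf_uniform_streams: "set_pmf uniform_streams = PiE {..<D} (\<lambda>_. carrier R)"
  unfolding uniform_streams_def using finite_carrier zero_closed
  by (subst set_pmf_of_set) (auto simp: finite_PiE PiE_eq_empty_iff)

lemma rx_shift_closed: "rx_shift a0 ai l z \<in> carrier R"
  unfolding rx_shift_def Let_def by auto

lemma rx_values_closed: "x \<in> PiE {..<D} (\<lambda>_. carrier R) \<Longrightarrow> l < D \<Longrightarrow> rx_values a x l \<in> carrier R"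
  unfolding rx_values_def using rx_shift_closed by auto

lemma map_pmf_rx_values: "map_pmf (rx_values a) uniform_streams = uniform_streams"
  unfolding uniform_streams_def rx_values_def
proof (rule map_pmf_of_set_PiE_triangular[where \<phi>="\<lambda>l z t. t \<oplus> rx_shift (a 0) (a (Suc (r l))) l z"])
  show "inj_on (\<lambda>t. t \<oplus> rx_shift (a 0) (a (Suc (r l))) l z) (carrier R)" for l z
    using rx_shift_closed by (auto intro!: inj_onI)
qed (use rx_shift_closed finite_carrier zero_closed in auto)

lemma box_out_receiver:
  "l < D \<Longrightarrow> box_out a x (Suc (r l)) = RxOut (decode (rx_values a x l))"
  using r_inj by (simp add: box_out_def rx_out_def)

lemma box_out_nonreceiver: "k \<notin> r ` {..<D} \<Longrightarrow> box_out a x (Suc k) = RxOut 0"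
  by (simp add: box_out_def rx_out_def)

lemma interference_known:
  assumes later_silent: "\<And>m. l < m \<Longrightarrow> m < D \<Longrightarrow> g (c m) = \<zero>"
    and "g j \<in> carrier R" and "j \<noteq> c l" and "l < D"
    and x: "x \<in> PiE {..<D} (\<lambda>_. carrier R)"
  shows "g j \<otimes> antenna_vec D x j = g j \<otimes> antenna_vec l (restrict x {..<l}) j"
proof -
  have closed: "antenna_vec D x j \<in> carrier R" "antenna_vec l (restrict x {..<l}) j \<in> carrier R"
    using x \<open>l < D\<close> by (auto intro!: antenna_vec_closed)
  consider (earlier) m where "m < l" "j = c m" | (later) m where "l < m" "m < D" "j = c m"
    | (silent) "j \<notin> c ` {..<D}"
    using \<open>j \<noteq> c l\<close> by (metis imageE lessThan_iff linorder_neqE_nat)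
  then show ?thesis
  proof cases
    case earlier
    then show ?thesis using \<open>l < D\<close> by (simp add: antenna_vec_stream)
  next
    case later
    then show ?thesis using later_silent closed by simp
  next
    case silent
    then have "j \<notin> c ` {..<l}" using \<open>l < D\<close> by auto
    with silent show ?thesis by (simp add: antenna_vec_def)
  qed
qed

lemma known_interference_closed:
  "(\<And>j. j < B \<Longrightarrow> g j \<in> carrier R) \<Longrightarrow> (\<And>m. m < l \<Longrightarrow> z m \<in> carrier R) \<Longrightarrow>
     known_interference l g z \<in> carrier R"
  unfolding known_interference_def by (intro finsum_closed funcsetI m_closed antenna_vec_closed) auto

lemma known_interference_cong:
  assumes "\<And>j. j < B \<Longrightarrow> g j = g' j"
    and "\<And>j. j < B \<Longrightarrow> g' j \<in> carrier R" and "\<And>m. m < l \<Longrightarrow> z m \<in> carrier R"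
  shows "known_interference l g z = known_interference l g' z"
  unfolding known_interference_def using assms
  by (intro finsum_cong' funcsetI m_closed antenna_vec_closed) auto

lemma received_signal:
  assumes G: "G \<in> coef_set R M K B 1" and x: "x \<in> PiE {..<D} (\<lambda>_. carrier R)" and "l < D"
  defines "g \<equiv> G 0 (r l)"
  shows "rx_obs_Y R B 1 (tx_input x) G (r l) 0 =
           g (c l) \<otimes> x l \<oplus> known_interference l g (restrict x {..<l})"
proof -
  have "r l < K" "c l < B" using \<open>l < D\<close> r_range c_range by auto
  have g_pattern: "g j \<in> (if M (r l) j then carrier R - {\<zero>} else {\<zero>})" if "j < B" for j
    using coef_set_pattern[OF G _ \<open>r l < K\<close> that] by (simp add: g_def)
  have g_closed: "g j \<in> carrier R" if "j < B" for j
    using g_pattern[OF that] by (auto split: if_splits)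
  have later_silent: "g (c m) = \<zero>" if "l < m" "m < D" for m
  proof -
    have "c m < B" using c_range \<open>m < D\<close> by auto
    then show ?thesis using g_pattern[of "c m"] triangular[OF that] by simp
  qed
  have x_closed: "m < D \<Longrightarrow> x m \<in> carrier R" for m
    using x by auto
  have av_closed: "antenna_vec D x j \<in> carrier R" "antenna_vec l (restrict x {..<l}) j \<in> carrier R" for j
    using x_closed \<open>l < D\<close> by (auto intro!: antenna_vec_closed)
  define T where "T = {..<B} - {c l}"
  have "rx_obs_Y R B 1 (tx_input x) G (r l) 0 = (\<Oplus>j\<in>{..<B}. g j \<otimes> antenna_vec D x j)"
    unfolding rx_obs_Y_def tx_input_def
    using g_closed av_closed by (auto simp: g_def intro!: finsum_cong')
  also have "{..<B} = insert (c l) T" using \<open>c l < B\<close> by (auto simp: T_def)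
  also have "(\<Oplus>j\<in>insert (c l) T. g j \<otimes> antenna_vec D x j) =
      g (c l) \<otimes> antenna_vec D x (c l) \<oplus> (\<Oplus>j\<in>T. g j \<otimes> antenna_vec D x j)"
    by (rule finsum_insert) (use g_closed av_closed \<open>c l < B\<close> in \<open>auto simp: T_def\<close>)
  also have "antenna_vec D x (c l) = x l"
    using \<open>l < D\<close> by (simp add: antenna_vec_stream)
  also have "(\<Oplus>j\<in>T. g j \<otimes> antenna_vec D x j) = known_interference l g (restrict x {..<l})"
    unfolding known_interference_def T_def[symmetric]
  proof (rule finsum_cong')
    show "(\<lambda>j. g j \<otimes> antenna_vec l (restrict x {..<l}) j) \<in> T \<rightarrow> carrier R"
      using g_closed av_closed by (auto simp: T_def)
    show "g j \<otimes> antenna_vec D x j = g j \<otimes> antenna_vec l (restrict x {..<l}) j" if "j \<in> T" for j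
      using that g_closed \<open>l < D\<close> x later_silent by (intro interference_known) (auto simp: T_def)
  qed simp
  finally show ?thesis .
qed

lemma msg_below_size: "w \<in> msg_set K msg_size \<Longrightarrow> k < K \<Longrightarrow> w k < msg_size k"
  by (auto simp: msg_set_def PiE_iff)

lemma box_decodes:
  assumes w: "w \<in> msg_set K msg_size" and G: "G \<in> coef_set R M K B 1"
    and x: "x \<in> PiE {..<D} (\<lambda>_. carrier R)" and "l < D"
  shows "box_out (box_input R K B 1 w (tx_input x) G) x (Suc (r l)) = RxOut (w (r l))"
proof -
  define a where "a = box_input R K B 1 w (tx_input x) G"
  define g where "g = G 0 (r l)"
  define I where "I = known_interference l g (restrict x {..<l})"
  have "r l < K" "c l < B" using \<open>l < D\<close> r_range c_range by auto
  have "w (r l) < q"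
    using msg_below_size[OF w \<open>r l < K\<close>] \<open>l < D\<close> by (simp add: msg_size_def)
  then have ew: "e (w (r l)) \<in> carrier R" by (rule e_closed)
  have g_closed: "g j \<in> carrier R" if "j < B" for j
    using coef_set_pattern[OF G _ \<open>r l < K\<close> that] by (auto simp: g_def split: if_splits)
  have g_unit: "g (c l) \<in> Units R"
    using coef_set_pattern[OF G _ \<open>r l < K\<close> \<open>c l < B\<close>] diagonal[OF \<open>l < D\<close>] field_Units
    by (simp add: g_def)
  have x_closed: "m < D \<Longrightarrow> x m \<in> carrier R" for m
    using x by auto
  have xl: "x l \<in> carrier R" using x_closed \<open>l < D\<close> .
  have I: "I \<in> carrier R"
    unfolding I_def by (rule known_interference_closed[OF g_closed]) (use x_closed \<open>l < D\<close> in simp_all)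
  have rx_in: "a (Suc (r l)) = RxIn (rx_obs_Y R B 1 (tx_input x) G (r l)) (rx_obs_G B 1 G (r l))"
    using \<open>r l < K\<close> by (simp add: a_def box_input_rx)
  have rx_G_eq: "rx_G (a (Suc (r l))) 0 j = g j" if "j < B" for j
    using that by (simp add: rx_in rx_obs_G_def g_def)
  have y: "rx_Y (a (Suc (r l))) 0 = g (c l) \<otimes> x l \<oplus> I"
    using received_signal[OF G x \<open>l < D\<close>] by (simp add: rx_in g_def I_def)
  have "g (c l) \<otimes> x l \<oplus> I \<ominus> I = g (c l) \<otimes> x l"
    using Units_closed[OF g_unit] xl I by (simp add: a_minus_def a_assoc r_neg)
  moreover have "inv (g (c l)) \<otimes> (g (c l) \<otimes> x l) = x l"
    using g_unit Units_closed[OF g_unit] Units_inv_closed[OF g_unit] xl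
    by (simp add: m_assoc[symmetric] Units_l_inv)
  moreover have "known_interference l (rx_G (a (Suc (r l))) 0) (restrict x {..<l}) = I"
    unfolding I_def
    by (rule known_interference_cong[OF rx_G_eq g_closed]) (use x_closed \<open>l < D\<close> in simp_all)
  moreover have "a 0 = TxIn w" by (simp add: a_def box_input_tx)
  ultimately have "rx_shift (a 0) (a (Suc (r l))) l (restrict x {..<l}) = e (w (r l)) \<ominus> x l"
    using y ew xl rx_G_eq[OF \<open>c l < B\<close>] by (simp add: rx_shift_def)
  then have "rx_values a x l = e (w (r l))"
    using \<open>l < D\<close> xl ew by (simp add: rx_values_def a_minus_def a_comm[of "e (w (r l))" "\<ominus> x l"] r_neg2)
  then show ?thesis
    using \<open>l < D\<close> \<open>w (r l) < q\<close> by (simp add: a_def box_out_receiver decode_e)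
qed

lemma box_marginal_with_tx:
  assumes "0 \<in> S" and "\<forall>i\<in>S. a i = a' i"
  shows "map_pmf (\<lambda>ou. restrict ou S) (box a) = map_pmf (\<lambda>ou. restrict ou S) (box a')"
proof -
  have "box_out a x i = box_out a' x i" if "i \<in> S" for x i
  proof (cases "i > 0 \<and> i - 1 \<in> r ` {..<D}")
    case True
    then obtain l where "l < D" "i = Suc (r l)" by force
    moreover have "a 0 = a' 0" "a i = a' i" using assms that by auto
    ultimately show ?thesis by (simp add: box_out_receiver rx_values_def)
  qed (auto simp: box_out_def rx_out_def)
  then have "restrict (box_out a x) S = restrict (box_out a' x) S" for x
    by (intro restrict_ext) simp
  then show ?thesis unfolding box_def map_pmf_comp by simp
qed

lemma box_marginal_receivers:
  assumes "0 \<notin> S"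
  shows "map_pmf (\<lambda>ou. restrict ou S) (box a) =
           map_pmf (\<lambda>v. restrict (\<lambda>i. rx_out v (i - 1)) S) uniform_streams"
proof -
  have "restrict (box_out a x) S = restrict (\<lambda>i. rx_out (rx_values a x) (i - 1)) S" for x
    using assms by (auto simp: box_out_def intro!: restrict_ext)
  then have "map_pmf (\<lambda>ou. restrict ou S) (box a) =
      map_pmf (\<lambda>v. restrict (\<lambda>i. rx_out v (i - 1)) S) (map_pmf (rx_values a) uniform_streams)"
    unfolding box_def map_pmf_comp by simp
  then show ?thesis by (simp only: map_pmf_rx_values)
qed

lemma box_out_rx_range:
  assumes "x \<in> PiE {..<D} (\<lambda>_. carrier R)"
  shows "box_out a x (Suc k) \<in> RxOut ` {..<q}"
proof (cases "k \<in> r ` {..<D}")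
  case True
  then obtain l where "l < D" "k = r l" by auto
  then show ?thesis
    using decode_range[OF rx_values_closed[OF assms \<open>l < D\<close>]] by (simp add: box_out_receiver)
qed (simp add: box_out_nonreceiver q_pos)

lemma ns_box_box: "ns_box (Suc K) I box"
  unfolding ns_box_def
proof (intro conjI allI impI ballI)
  let ?Out = "\<lambda>i. if i = 0 then TxOut ` chin_set R B 1 else RxOut ` {..<q}"
  have out_finite: "finite (?Out i)" for i
    using finite_carrier by (simp add: chin_set_def finite_PiE)
  have out_range: "ou i \<in> ?Out i" if ou_in: "ou \<in> set_pmf (box a)" for a ou i
  proof -
    obtain x where x: "x \<in> PiE {..<D} (\<lambda>_. carrier R)" and ou: "ou = box_out a x"
      using ou_in by (auto simp: box_def set_pmf_uniform_streams)
    show ?thesis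
    proof (cases i)
      case 0
      then show ?thesis using tx_input_closed[OF x] by (simp add: ou box_out_def)
    next
      case (Suc k)
      then show ?thesis using box_out_rx_range[OF x] by (simp add: ou)
    qed
  qed
  show "\<exists>Out. (\<forall>i<Suc K. finite (Out i)) \<and>
      (\<forall>a\<in>PiE {..<Suc K} I. \<forall>ou\<in>set_pmf (box a). \<forall>i<Suc K. ou i \<in> Out i)"
  proof (intro exI[of _ ?Out] conjI allI impI ballI)
    show "finite (?Out i)" for i by (rule out_finite)
    show "ou i \<in> ?Out i" if "ou \<in> set_pmf (box a)" for a ou i using that by (rule out_range)
  qed
next
  fix S :: "nat set" and a a' :: "nat \<Rightarrow> party_in"
  assume agree: "\<forall>i\<in>S. a i = a' i"
  show "map_pmf (\<lambda>ou. restrict ou S) (box a) = map_pmf (\<lambda>ou. restrict ou S) (box a')"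
  proof (cases "0 \<in> S")
    case True
    then show ?thesis using agree by (rule box_marginal_with_tx)
  next
    case False
    then show ?thesis by (simp add: box_marginal_receivers)
  qed
qed

lemma ns_scheme_box: "ns_scheme R M K B 1 msg_size box"
  unfolding ns_scheme_def
proof (intro conjI allI impI ballI)
  show "0 < msg_size k" for k using q_pos by (simp add: msg_size_def)
  show "ns_box (Suc K) (party_inputs R K B 1 msg_size) box" by (rule ns_box_box)
next
  fix a ou assume "ou \<in> set_pmf (box a)"
  then obtain x where x: "x \<in> PiE {..<D} (\<lambda>_. carrier R)" and ou: "ou = box_out a x"
    by (auto simp: box_def set_pmf_uniform_streams)
  show "ou 0 \<in> TxOut ` chin_set R B 1" using tx_input_closed[OF x] by (simp add: ou box_out_def)
  show "ou (Suc k) \<in> range RxOut" for k by (simp add: ou box_out_def rx_out_def)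
qed simp

lemma box_error_null:
  assumes w: "w \<in> msg_set K msg_size" and G: "G \<in> coef_set R M K B 1" and "k < K"
  shows "measure_pmf.prob (box (box_input R K B 1 w X G)) {ou. ou 0 = TxOut X \<and> ou (Suc k) \<noteq> RxOut (w k)} = 0"
proof -
  define a where "a = box_input R K B 1 w X G"
  have "ou (Suc k) = RxOut (w k)" if ou_in: "ou \<in> set_pmf (box a)" and "ou 0 = TxOut X" for ou
  proof -
    obtain x where x: "x \<in> PiE {..<D} (\<lambda>_. carrier R)" and ou: "ou = box_out a x"
      using ou_in by (auto simp: box_def set_pmf_uniform_streams)
    then have "X = tx_input x" using \<open>ou 0 = TxOut X\<close> by (simp add: box_out_def)
    show ?thesis
    proof (cases "k \<in> r ` {..<D}")
      case True
      then obtain l where "l < D" "k = r l" by auto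
      then show ?thesis using box_decodes[OF w G x] by (simp add: ou a_def \<open>X = tx_input x\<close>)
    next
      case False
      then have "w k = 0" using msg_below_size[OF w \<open>k < K\<close>] by (simp add: msg_size_def)
      then show ?thesis using False by (simp add: ou box_out_nonreceiver)
    qed
  qed
  then show ?thesis by (auto simp: a_def measure_pmf_zero_iff)
qed

lemma err_prob_box: "k < K \<Longrightarrow> err_prob R M K B 1 msg_size box k = 0"
  unfolding err_prob_def by (intro sum.neutral ballI) (simp only: box_error_null mult_zero_right)

lemma ns_achievable_triangular_rates:
  "ns_achievable R M K B (\<lambda>k. of_bool (k \<in> r ` {..<D}) * log 2 (real q))"
proof -
  have rates: "(\<lambda>k. log 2 (real (msg_size k)) / real (1::nat)) =
      (\<lambda>k. of_bool (k \<in> r ` {..<D}) * log 2 (real q))"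
    by (auto simp: msg_size_def)
  show ?thesis
    using ns_achievable_zero_error[OF ns_scheme_box err_prob_box] unfolding rates .
qed

end

lemma has_tri_achievable:
  assumes "has_tri M K B D"
  obtains A where "A \<subseteq> {..<K}" and "card A = D"
    and "\<And>F :: nat ring. field F \<Longrightarrow> finite (carrier F) \<Longrightarrow>
           ns_achievable F M K B (\<lambda>k. of_bool (k \<in> A) * log 2 (real (card (carrier F))))"
proof -
  obtain r c where r: "inj_on r {..<D}" "r ` {..<D} \<subseteq> {..<K}"
    and c: "inj_on c {..<D}" "c ` {..<D} \<subseteq> {..<B}"
    and tri: "\<forall>i<D. M (r i) (c i)" "\<forall>i<D. \<forall>j<D. i < j \<longrightarrow> \<not> M (r i) (c j)"
    using assms unfolding has_tri_def by blast
  have "ns_achievable F M K B (\<lambda>k. of_bool (k \<in> r ` {..<D}) * log 2 (real (card (carrier F))))"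
    if "field F" and "finite (carrier F)" for F :: "nat ring"
  proof -
    obtain e where "bij_betw e {..<card (carrier F)} (carrier F)"
      using ex_bij_betw_nat_finite[OF \<open>finite (carrier F)\<close>] by (auto simp: atLeast0LessThan)
    then interpret triangular_scheme F M K B D r c e
      using that r c tri by (intro triangular_scheme.intro triangular_scheme_axioms.intro) auto
    show ?thesis by (rule ns_achievable_triangular_rates)
  qed
  with r show thesis by (intro that[of "r ` {..<D}"]) (auto simp: card_image)
qed

theorem theorem9:
  fixes M :: "nat \<Rightarrow> nat \<Rightarrow> bool" and K B :: nat
  shows "(\<forall>F :: nat ring. field F \<and> finite (carrier F) \<longrightarrow>
            C_sum_NS F M K B \<ge> ereal (real (tri M K B) * log 2 (real (card (carrier F))))) \<and>
         (\<forall>Fam :: nat \<Rightarrow> nat ring. (\<forall>q. primepow q \<longrightarrow>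
               field (Fam q) \<and> finite (carrier (Fam q)) \<and> card (carrier (Fam q)) = q) \<longrightarrow>
            d_sum_NS Fam M K B \<ge> ereal (real (tri M K B)))"
proof -
  obtain A where A: "A \<subseteq> {..<K}" "card A = tri M K B"
    and achievable: "\<And>F :: nat ring. field F \<Longrightarrow> finite (carrier F) \<Longrightarrow>
           ns_achievable F M K B (\<lambda>k. of_bool (k \<in> A) * log 2 (real (card (carrier F))))"
    by (rule has_tri_achievable[OF has_tri_tri[of M K B]]) blast
  have sum_A: "(\<Sum>k<K. of_bool (k \<in> A) * v) = real (tri M K B) * v" for v :: real
    using A by (simp add: Int_absorb1)
  show ?thesis
  proof (intro conjI allI impI)
    fix F :: "nat ring" assume "field F \<and> finite (carrier F)"
    then have F: "field F" "finite (carrier F)" by auto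
    from C_sum_NS_ge[OF achievable[OF F]]
    show "ereal (real (tri M K B) * log 2 (real (card (carrier F)))) \<le> C_sum_NS F M K B"
      by (simp add: sum_A)
  next
    fix Fam :: "nat \<Rightarrow> nat ring"
    assume Fam: "\<forall>q. primepow q \<longrightarrow> field (Fam q) \<and> finite (carrier (Fam q)) \<and> card (carrier (Fam q)) = q"
    have "ns_achievable (Fam q) M K B (\<lambda>k. of_bool (k \<in> A) * log 2 (real q))" if "primepow q" for q
    proof -
      from Fam that have Fq: "field (Fam q)" "finite (carrier (Fam q))" "card (carrier (Fam q)) = q"
        by auto
      show ?thesis using achievable[OF Fq(1,2)] unfolding Fq(3) .
    qed
    then have "dof_achievable Fam M K B (\<lambda>k. of_bool (k \<in> A))"
      by (rule dof_achievable_scaled)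
    from d_sum_NS_ge[OF this] show "ereal (real (tri M K B)) \<le> d_sum_NS Fam M K B"
      using sum_A[of 1] by simp
  qed
qed

end
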